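(* Let $d\ge 2$ and $p\ge 2$ be integers and let $X\in\mathcal{A}^d_{p,p}$. Put $\widetilde X:=\operatorname{tr}_{2,\ldots,2p-1}\big(XV^{(p-1)}\big)$, an operator on systems $1$ and $2p$. Then $\widetilde X\in\mathcal{A}^d_{1,1}$ (as an operator on systems $1,2p$), and $$V^{(p-1)}XV^{(p-1)}=\widetilde X\otimes \prod_{k=1}^{p-1}W_{p+1-k,\,p+k},$$ where the first factor acts on systems $1,2p$ and the second on systems $2,\ldots,2p-1$.
   Context: Consider $(\mathbb{C}^d)^{\otimes 2p}$ with tensor factors (systems) labelled $1,\ldots,2p$. For distinct systems $a,b$ let $W_{a,b}=\sum_{i,j=1}^d |i\rangle\langle j|_a\otimes |i\rangle\langle j|_b$ (the partial transpose on system $b$ of the swap of $a$ and $b$; it equals $d$ times the projector onto the maximally entangled state of $a,b$), extended by the identity on the other systems. Define $V^{(p-1)}=\prod_{k=1}^{p-1}W_{p+1-k,\,p+k}$ (identity on systems $1$ and $2p$). For $\pi$ in the symmetric group $\mathcal{S}_{2p}$ let $V_\pi$ be the operator permuting the $2p$ tensor factors according to $\pi$. The algebra of partially transposed permutation operators is $\mathcal{A}^d_{p,p}=\operatorname{span}_{\mathbb{C}}\{V_\pi^{t_{p+1}\circ\cdots\circ t_{2p}}:\pi\in\mathcal{S}_{2p}\}$, where $t_k$ is the partial transposition (in the standard basis) on system $k$. Analogously $\mathcal{A}^d_{1,1}$ on two systems $a,b$ is $\operatorname{span}\{\mathbb{1},W_{a,b}\}$. *)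

theory Defs
  imports Complex_Main "HOL-Library.FuncSet" "HOL-Combinatorics.Permutations"
begin

text \<open>Operators on a tensor product of copies of C^d indexed by a finite set S of
systems are represented by their matrix entries: a multi-index is a function
assigning to each system k in S a basis label in {0..<d} (and undefined outside S).\<close>

type_synonym mi = "nat \<Rightarrow> nat"
type_synonym op = "mi \<Rightarrow> mi \<Rightarrow> complex"

definition idx :: "nat set \<Rightarrow> nat \<Rightarrow> mi set" where
  "idx S d = PiE S (\<lambda>_. {..<d})"

definition opmult :: "nat set \<Rightarrow> nat \<Rightarrow> op \<Rightarrow> op \<Rightarrow> op" where
  "opmult S d A B = (\<lambda>i j. \<Sum>k\<in>idx S d. A i k * B k j)"

definition ident :: "nat set \<Rightarrow> op" where
  "ident S = (\<lambda>i j. if (\<forall>k\<in>S. i k = j k) then 1 else 0)"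

text \<open>W_{a,b} = sum_{i,j} |i><j|_a (x) |i><j|_b, extended by the identity on S - {a,b}.\<close>
definition Wop :: "nat set \<Rightarrow> nat \<Rightarrow> nat \<Rightarrow> op" where
  "Wop S a b = (\<lambda>i j. if i a = i b \<and> j a = j b \<and> (\<forall>k\<in>S-{a,b}. i k = j k) then 1 else 0)"

text \<open>Permutation operator: moves tensor factor k to position pi k.\<close>
definition permop :: "nat set \<Rightarrow> (nat \<Rightarrow> nat) \<Rightarrow> op" where
  "permop S \<pi> = (\<lambda>i j. if (\<forall>k\<in>S. i (\<pi> k) = j k) then 1 else 0)"

definition ptrans1 :: "nat \<Rightarrow> op \<Rightarrow> op" where
  "ptrans1 k X = (\<lambda>i j. X (i(k := j k)) (j(k := i k)))"

definition Vprod :: "nat set \<Rightarrow> nat \<Rightarrow> nat \<Rightarrow> op" where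
  "Vprod S d p = fold (\<lambda>k A. opmult S d A (Wop S (p+1-k) (p+k))) [1..<p] (ident S)"

definition ptrace :: "nat set \<Rightarrow> nat \<Rightarrow> op \<Rightarrow> op" where
  "ptrace T d Y = (\<lambda>i j. \<Sum>m\<in>idx T d.
      Y (\<lambda>k. if k \<in> T then m k else i k) (\<lambda>k. if k \<in> T then m k else j k))"

definition optensor :: "nat set \<Rightarrow> nat set \<Rightarrow> op \<Rightarrow> op \<Rightarrow> op" where
  "optensor S1 S2 A B = (\<lambda>i j. A (restrict i S1) (restrict j S1) * B (restrict i S2) (restrict j S2))"

text \<open>Membership in A^d_{p,p} = span of the partially transposed permutation operators
(transposition on systems p+1..2p), as an operator on systems 1..2p.\<close>
definition in_Apq :: "nat \<Rightarrow> nat \<Rightarrow> op \<Rightarrow> bool" where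
  "in_Apq d p X \<longleftrightarrow> (\<exists>c :: (nat \<Rightarrow> nat) \<Rightarrow> complex.
     \<forall>i\<in>idx {1..2*p} d. \<forall>j\<in>idx {1..2*p} d.
       X i j = (\<Sum>\<pi>\<in>{\<pi>. \<pi> permutes {1..2*p}}.
                  c \<pi> * fold ptrans1 [p+1..<2*p+1] (permop {1..2*p} \<pi>) i j))"

definition in_A11 :: "nat set \<Rightarrow> nat \<Rightarrow> nat \<Rightarrow> nat \<Rightarrow> op \<Rightarrow> bool" where
  "in_A11 S a b d X \<longleftrightarrow> (\<exists>\<alpha> \<beta> :: complex.
     \<forall>i\<in>idx S d. \<forall>j\<in>idx S d. X i j = \<alpha> * ident S i j + \<beta> * Wop S a b i j)"

end

theory Submission
  imports Defs
begin

text \<open>V^{(p-1)} is the product of the commuting operators W on the mirror pairs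
  (p+1-k, p+k), so its entry at (i, j) is 1 exactly when i and j are palindromic on the middle
  systems 2, ..., 2p-1 and agree on the systems 1 and 2p. Hence the entries of V X V and of the
  partial trace of X V are both, up to this indicator, sums of X l l' over the palindromic
  completions l, l' of given labels on the systems 1 and 2p, which gives the tensor factorization.
  By linearity, membership in A_{1,1} reduces to X a partially transposed permutation operator.
  Its entries are products of Kronecker deltas which, together with the palindrome constraints,
  form a network in which every internal label occurs in exactly two deltas. Summing out the
  internal labels one at a time, closed loops give powers of d and the open strands pair the four
  boundary labels either as the identity or as W.\<close>

lemma sum_PiE_insert:
  assumes "v \<notin> I"
  shows "(\<Sum>w\<in>PiE (insert v I) T. F w) = (\<Sum>u\<in>T v. \<Sum>w\<in>PiE I T. F (w(v := u)))"
proof -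
  have "(\<Sum>w\<in>PiE (insert v I) T. F w) = (\<Sum>(u, w)\<in>T v \<times> PiE I T. F (w(v := u)))"
    unfolding PiE_insert_eq by (subst sum.reindex[OF inj_combinator[OF assms]]) (simp add: o_def case_prod_unfold)
  then show ?thesis
    by (simp add: sum.cartesian_product)
qed

lemma sum_if_eq_const:
  assumes "(A::nat) < d"
  shows "(\<Sum>u<d. if u = A \<and> P then 1 else 0 :: complex) = (if P then 1 else 0)"
  using assms by (cases P) (simp_all add: sum.delta)

lemma finite_idx: "finite S \<Longrightarrow> finite (idx S d)"
  unfolding idx_def by (simp add: finite_PiE)

lemma idx_upd: "i \<in> idx S d \<Longrightarrow> a \<in> S \<Longrightarrow> u < d \<Longrightarrow> i(a := u) \<in> idx S d"
  unfolding idx_def by (auto simp: PiE_iff extensional_def)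

lemma restrict_idx: "i \<in> idx S d \<Longrightarrow> T \<subseteq> S \<Longrightarrow> restrict i T \<in> idx T d"
  unfolding idx_def by (auto simp: PiE_iff)

lemma opmult_cong_left:
  "(\<And>k. k \<in> idx S d \<Longrightarrow> A i k = A' i k) \<Longrightarrow> opmult S d A B i j = opmult S d A' B i j"
  unfolding opmult_def by simp

definition glue :: "'a set \<Rightarrow> ('a \<Rightarrow> 'b) \<Rightarrow> ('a \<Rightarrow> 'b) \<Rightarrow> 'a \<Rightarrow> 'b" where
  "glue I w ext x = (if x \<in> I then w x else ext x)"

lemma glue_insert_upd: "glue (insert v I) (w(v := u)) ext = (glue I w ext)(v := u)"
  by (auto simp: glue_def fun_eq_iff)

lemma bij_betw_glue:
  assumes "I \<subseteq> A" and ext: "ext \<in> PiE (A - I) (\<lambda>_. D)"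
  shows "bij_betw (\<lambda>w. glue I w ext) (PiE I (\<lambda>_. D)) {L \<in> PiE A (\<lambda>_. D). \<forall>x\<in>A - I. L x = ext x}"
proof (rule bij_betw_byWitness[where f' = "\<lambda>L. restrict L I"])
  show "\<forall>w\<in>PiE I (\<lambda>_. D). restrict (glue I w ext) I = w"
    by (auto simp: glue_def fun_eq_iff PiE_def extensional_def)
  show "\<forall>L\<in>{L \<in> PiE A (\<lambda>_. D). \<forall>x\<in>A - I. L x = ext x}. glue I (restrict L I) ext = L"
    using ext by (auto simp: glue_def fun_eq_iff PiE_def extensional_def) (metis Diff_iff)
  show "(\<lambda>w. glue I w ext) ` PiE I (\<lambda>_. D) \<subseteq> {L \<in> PiE A (\<lambda>_. D). \<forall>x\<in>A - I. L x = ext x}"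
    using ext assms(1) by (auto simp: glue_def PiE_def extensional_def)
  show "(\<lambda>L. restrict L I) ` {L \<in> PiE A (\<lambda>_. D). \<forall>x\<in>A - I. L x = ext x} \<subseteq> PiE I (\<lambda>_. D)"
    using assms(1) by auto
qed

lemma sum_glue:
  assumes "finite A" "finite D" "I \<subseteq> A" "ext \<in> PiE (A - I) (\<lambda>_. D)"
  shows "(\<Sum>w\<in>PiE I (\<lambda>_. D). F (glue I w ext)) =
    (\<Sum>L\<in>PiE A (\<lambda>_. D). if \<forall>x\<in>A - I. L x = ext x then F L else 0)"
proof -
  have "(\<Sum>w\<in>PiE I (\<lambda>_. D). F (glue I w ext)) = (\<Sum>L\<in>{L \<in> PiE A (\<lambda>_. D). \<forall>x\<in>A - I. L x = ext x}. F L)"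
    by (rule sum.reindex_bij_betw[OF bij_betw_glue[OF assms(3,4)]])
  also have "\<dots> = (\<Sum>L\<in>PiE A (\<lambda>_. D). if \<forall>x\<in>A - I. L x = ext x then F L else 0)"
    using assms(1,2) by (intro sum.inter_filter) (simp add: finite_PiE)
  finally show ?thesis .
qed

definition two_copies :: "('a \<Rightarrow> 'b) \<Rightarrow> ('a \<Rightarrow> 'b) \<Rightarrow> bool \<times> 'a \<Rightarrow> 'b" where
  "two_copies l l' = (\<lambda>(r, s). if r then l s else l' s)"

lemma two_copies_sides [simp]:
  "(\<lambda>s. two_copies l l' (True, s)) = l" "(\<lambda>s. two_copies l l' (False, s)) = l'"
  by (simp_all add: two_copies_def)

lemma two_copies_of_sides: "two_copies (\<lambda>s. L (True, s)) (\<lambda>s. L (False, s)) = L"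
  by (auto simp: two_copies_def fun_eq_iff)

lemma copy_idx: "L \<in> PiE (UNIV \<times> S) (\<lambda>_. {..<d}) \<Longrightarrow> (\<lambda>s. L (r, s)) \<in> idx S d"
  unfolding idx_def by (auto simp: PiE_iff extensional_def)

lemma bij_betw_two_copies:
  "bij_betw (\<lambda>(l, l'). two_copies l l') (PiE S (\<lambda>_. D) \<times> PiE S (\<lambda>_. D)) (PiE (UNIV \<times> S) (\<lambda>_. D))"
proof (rule bij_betw_byWitness[where f' = "\<lambda>L. (\<lambda>s. L (True, s), \<lambda>s. L (False, s))"])
  show "\<forall>L\<in>PiE (UNIV \<times> S) (\<lambda>_. D). (\<lambda>(l, l'). two_copies l l') (\<lambda>s. L (True, s), \<lambda>s. L (False, s)) = L"
    by (auto simp: two_copies_def fun_eq_iff)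
qed (auto simp: two_copies_def PiE_def extensional_def)

section \<open>Contraction of networks of Kronecker deltas\<close>

definition wired :: "'e set \<Rightarrow> ('e \<Rightarrow> 'n) \<Rightarrow> ('e \<Rightarrow> 'n) \<Rightarrow> ('n \<Rightarrow> 'b) \<Rightarrow> bool" where
  "wired E f g L \<longleftrightarrow> (\<forall>e\<in>E. L (f e) = L (g e))"

text \<open>Summing out the label at v, the sink of wire e2 and the source of wire e1, merges the two
  wires into the single wire e2 from f e2 to g e1; if e1 = e2 the wire is a loop and contributes
  the factor d.\<close>

lemma sum_wired_upd:
  assumes f: "inj_on f E" and g: "inj_on g E"
    and e1: "e1 \<in> E" "f e1 = v" and e2: "e2 \<in> E" "g e2 = v" and bound: "e1 \<noteq> e2 \<Longrightarrow> L (g e1) < d"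
  shows "(\<Sum>u<d. if wired E f g (L(v := u)) then 1 else 0 :: complex) =
    (if e1 = e2 then of_nat d else 1) * (if wired (E - {e1}) f (g(e2 := g e1)) L then 1 else 0)"
proof -
  have f_off: "f e \<noteq> v" if "e \<in> E - {e1}" for e
    using f e1 that by (auto simp: inj_on_def)
  have g_off: "g e \<noteq> v" if "e \<in> E - {e2}" for e
    using g e2 that by (auto simp: inj_on_def)
  show ?thesis
  proof (cases "e1 = e2")
    case True
    then have "wired E f g (L(v := u)) = wired (E - {e1}) f (g(e2 := g e1)) L" for u
      using e1 e2 f_off g_off unfolding wired_def by auto
    then show ?thesis using True by simp
  next
    case False
    then have "wired E f g (L(v := u)) = (u = L (g e1) \<and> wired (E - {e1}) f (g(e2 := g e1)) L)" for u
      using e1 e2 f_off g_off unfolding wired_def by auto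
    then show ?thesis using False bound by (simp add: sum_if_eq_const)
  qed
qed

lemma wiring_delete_node:
  assumes f: "inj_on f E" and g: "inj_on g E"
    and fE: "f ` E = insert v I \<union> Src" and gE: "g ` E = insert v I \<union> Snk"
    and v: "v \<notin> I" "v \<notin> Src" "v \<notin> Snk"
    and e1: "e1 \<in> E" "f e1 = v" and e2: "e2 \<in> E" "g e2 = v"
  shows "inj_on (g(e2 := g e1)) (E - {e1})" "f ` (E - {e1}) = I \<union> Src"
    "(g(e2 := g e1)) ` (E - {e1}) = I \<union> Snk" "e1 \<noteq> e2 \<Longrightarrow> g e1 \<in> I \<union> Snk"
proof -
  show "inj_on (g(e2 := g e1)) (E - {e1})"
    using g e1 e2 unfolding inj_on_def by (metis DiffE fun_upd_apply singletonI)
  have "f ` (E - {e1}) = f ` E - {v}"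
    using f e1 by (auto simp: inj_on_image_set_diff)
  then show "f ` (E - {e1}) = I \<union> Src"
    using fE v by auto
  have "(g(e2 := g e1)) ` (E - {e1}) = g ` (E - {e2})"
    using e1 e2 by (cases "e1 = e2") (auto simp: image_iff)
  also have "\<dots> = g ` E - {v}"
    using g e2 by (auto simp: inj_on_image_set_diff)
  finally show "(g(e2 := g e1)) ` (E - {e1}) = I \<union> Snk"
    using gE v by auto
  assume "e1 \<noteq> e2"
  then have "g e1 \<noteq> v"
    using inj_onD[OF g _ e1(1) e2(1)] e2 by auto
  moreover have "g e1 \<in> insert v I \<union> Snk"
    using e1(1) by (simp only: gE[symmetric] imageI)
  ultimately show "g e1 \<in> I \<union> Snk"
    by blast
qed

lemma sum_wired_glue_insert:
  assumes v: "v \<notin> I" and f: "inj_on f E" and g: "inj_on g E"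
    and e1: "e1 \<in> E" "f e1 = v" and e2: "e2 \<in> E" "g e2 = v"
    and g_e1: "e1 \<noteq> e2 \<Longrightarrow> g e1 \<in> I \<union> Snk" and ext: "\<forall>x\<in>Snk. ext x < d"
  shows "(\<Sum>w\<in>PiE (insert v I) (\<lambda>_. {..<d}). if wired E f g (glue (insert v I) w ext) then 1 else 0) =
    (if e1 = e2 then of_nat d else 1) *
    (\<Sum>w\<in>PiE I (\<lambda>_. {..<d}). if wired (E - {e1}) f (g(e2 := g e1)) (glue I w ext) then 1 else 0 :: complex)"
proof -
  have "(\<Sum>w\<in>PiE (insert v I) (\<lambda>_. {..<d}). if wired E f g (glue (insert v I) w ext) then 1 else 0 :: complex) =
      (\<Sum>w\<in>PiE I (\<lambda>_. {..<d}). \<Sum>u<d. if wired E f g ((glue I w ext)(v := u)) then 1 else 0)"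
    unfolding sum_PiE_insert[OF v] glue_insert_upd by (rule sum.swap)
  also have "\<dots> = (\<Sum>w\<in>PiE I (\<lambda>_. {..<d}). (if e1 = e2 then of_nat d else 1) *
      (if wired (E - {e1}) f (g(e2 := g e1)) (glue I w ext) then 1 else 0))"
  proof (rule sum.cong[OF refl])
    fix w assume "w \<in> PiE I (\<lambda>_. {..<d})"
    then have "e1 \<noteq> e2 \<Longrightarrow> glue I w ext (g e1) < d"
      using g_e1 ext by (auto simp: glue_def)
    then show "(\<Sum>u<d. if wired E f g ((glue I w ext)(v := u)) then 1 else 0 :: complex) =
        (if e1 = e2 then of_nat d else 1) * (if wired (E - {e1}) f (g(e2 := g e1)) (glue I w ext) then 1 else 0)"
      by (rule sum_wired_upd[OF f g e1 e2])
  qed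
  finally show ?thesis
    by (simp add: sum_distrib_left)
qed

lemma wired_bij_iff:
  assumes f: "bij_betw f E Src" and g: "bij_betw g E Snk"
  shows "wired E f g ext \<longleftrightarrow> (\<forall>x\<in>Src. ext x = ext ((g \<circ> inv_into E f) x))"
proof
  assume "wired E f g ext"
  then show "\<forall>x\<in>Src. ext x = ext ((g \<circ> inv_into E f) x)"
    unfolding wired_def by (metis bij_betw_imp_surj_on bij_betw_inv_into_right comp_apply f inv_into_into)
next
  assume "\<forall>x\<in>Src. ext x = ext ((g \<circ> inv_into E f) x)"
  then show "wired E f g ext"
    unfolding wired_def using f by (simp add: bij_betw_apply bij_betw_inv_into_left)
qed

text \<open>Every port is the source of exactly one wire and the sink of exactly one wire, so the wires
  form closed loops through the internal ports I and strands from the ports in Src to those in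
  Snk.\<close>

lemma wiring_contraction:
  assumes "finite I"
  shows "\<lbrakk>inj_on f E; inj_on g E; f ` E = I \<union> Src; g ` E = I \<union> Snk; I \<inter> Src = {}; I \<inter> Snk = {}\<rbrakk> \<Longrightarrow>
    \<exists>c h. bij_betw h Src Snk \<and> (\<forall>ext. (\<forall>x\<in>Src \<union> Snk. ext x < d) \<longrightarrow>
      (\<Sum>w\<in>PiE I (\<lambda>_. {..<d}). if wired E f g (glue I w ext) then 1 else 0) =
      (of_nat d :: complex) ^ c * (if \<forall>x\<in>Src. ext x = ext (h x) then 1 else 0))"
  using assms
proof (induction I arbitrary: E g rule: finite_induct)
  case empty
  have f: "bij_betw f E Src" and g: "bij_betw g E Snk"
    using empty.prems by (auto simp: bij_betw_def)
  show ?case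
  proof (intro exI[of _ 0] exI[of _ "g \<circ> inv_into E f"] conjI allI impI)
    show "bij_betw (g \<circ> inv_into E f) Src Snk"
      by (rule bij_betw_trans[OF bij_betw_inv_into[OF f] g])
    fix ext :: "'a \<Rightarrow> nat"
    show "(\<Sum>w\<in>PiE {} (\<lambda>_. {..<d}). if wired E f g (glue {} w ext) then 1 else 0) =
        (of_nat d :: complex) ^ 0 * (if \<forall>x\<in>Src. ext x = ext ((g \<circ> inv_into E f) x) then 1 else 0)"
      using wired_bij_iff[OF f g, of ext] by (simp add: glue_def)
  qed
next
  case (insert v I)
  obtain e1 where e1: "e1 \<in> E" "f e1 = v" using insert.prems(3) by (metis UnCI imageE insertI1)
  obtain e2 where e2: "e2 \<in> E" "g e2 = v" using insert.prems(4) by (metis UnCI imageE insertI1)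
  have v: "v \<notin> I" "v \<notin> Src" "v \<notin> Snk" and disj: "I \<inter> Src = {}" "I \<inter> Snk = {}"
    using insert.hyps(2) insert.prems(5,6) by auto
  note del = wiring_delete_node[OF insert.prems(1-4) v e1 e2]
  obtain c h where h: "bij_betw h Src Snk" and IH: "\<forall>ext. (\<forall>x\<in>Src \<union> Snk. ext x < d) \<longrightarrow>
      (\<Sum>w\<in>PiE I (\<lambda>_. {..<d}). if wired (E - {e1}) f (g(e2 := g e1)) (glue I w ext) then 1 else 0) =
      (of_nat d :: complex) ^ c * (if \<forall>x\<in>Src. ext x = ext (h x) then 1 else 0)"
    using insert.IH[OF inj_on_diff[OF insert.prems(1)] del(1-3) disj] by (elim exE conjE) (rule that)
  show ?case
  proof (intro exI[of _ "if e1 = e2 then Suc c else c"] exI[of _ h] conjI h allI impI)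
    fix ext :: "'a \<Rightarrow> nat" assume ext: "\<forall>x\<in>Src \<union> Snk. ext x < d"
    then show "(\<Sum>w\<in>PiE (insert v I) (\<lambda>_. {..<d}). if wired E f g (glue (insert v I) w ext) then 1 else 0) =
        (of_nat d :: complex) ^ (if e1 = e2 then Suc c else c) * (if \<forall>x\<in>Src. ext x = ext (h x) then 1 else 0)"
      using sum_wired_glue_insert[OF v(1) insert.prems(1,2) e1 e2 del(4), of ext d] IH by simp
  qed
qed

section \<open>The operator V\<close>

definition palindromic :: "nat \<Rightarrow> mi \<Rightarrow> bool" where
  "palindromic p i \<longleftrightarrow> (\<forall>s\<in>{2..2*p-1}. i s = i (2*p+1-s))"

lemma mirror_in_middle: "(s::nat) \<in> {2..2*p-1} \<Longrightarrow> 2*p+1-s \<in> {2..2*p-1}"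
  by auto

lemma palindromic_cong:
  assumes "\<forall>s\<in>{2..2*p-1}. l s = l' s"
  shows "palindromic p l = palindromic p l'"
  unfolding palindromic_def
proof (intro ball_cong refl)
  fix s assume s: "s \<in> {2..2*p-1}"
  then have "l s = l' s" "l (2*p+1-s) = l' (2*p+1-s)"
    using assms mirror_in_middle[OF s] by blast+
  then show "(l s = l (2*p+1-s)) = (l' s = l' (2*p+1-s))" by simp
qed

lemma palindromic_iff_pairs: "palindromic p i \<longleftrightarrow> (\<forall>k\<in>{1..<p}. i (p+1-k) = i (p+k))"
proof
  assume H: "palindromic p i"
  show "\<forall>k\<in>{1..<p}. i (p+1-k) = i (p+k)"
  proof
    fix k assume "k \<in> {1..<p}"
    then have "p+1-k \<in> {2..2*p-1}" "2*p+1-(p+1-k) = p+k" by auto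
    then show "i (p+1-k) = i (p+k)" using H unfolding palindromic_def by metis
  qed
next
  assume H: "\<forall>k\<in>{1..<p}. i (p+1-k) = i (p+k)"
  show "palindromic p i" unfolding palindromic_def
  proof
    fix s assume s: "s \<in> {2..2*p-1}"
    show "i s = i (2*p+1-s)"
    proof (cases "s \<le> p")
      case True
      then have "p+1-s \<in> {1..<p}" "p+1-(p+1-s) = s" "p+(p+1-s) = 2*p+1-s" using s by auto
      then show ?thesis using H by metis
    next
      case False
      then have "s-p \<in> {1..<p}" "p+1-(s-p) = 2*p+1-s" "p+(s-p) = s" using s by auto
      then show ?thesis using H by metis
    qed
  qed
qed

lemma palindromic_iff_half:
  assumes "\<forall>t\<in>{2..2*p-1}. Q t \<or> Q (2*p+1-t)"
  shows "palindromic p l \<longleftrightarrow> (\<forall>t\<in>{2..2*p-1}. Q t \<longrightarrow> l t = l (2*p+1-t))"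
  unfolding palindromic_def
proof (intro iffI ballI)
  fix s assume H: "\<forall>t\<in>{2..2*p-1}. Q t \<longrightarrow> l t = l (2*p+1-t)" and s: "s \<in> {2..2*p-1}"
  have "2*p+1-(2*p+1-s) = s" using s by auto
  then show "l s = l (2*p+1-s)"
    using H assms s mirror_in_middle[OF s] by metis
qed auto

text \<open>The entries of the product of the W_{a,b} over a set P of disjoint pairs.\<close>

definition Wprod :: "nat set \<Rightarrow> (nat \<times> nat) set \<Rightarrow> op" where
  "Wprod S P = (\<lambda>i j. if (\<forall>p\<in>P. i (fst p) = i (snd p) \<and> j (fst p) = j (snd p)) \<and>
     (\<forall>s\<in>S - (fst ` P \<union> snd ` P). i s = j s) then 1 else 0)"

lemma Wprod_empty: "Wprod S {} = ident S"
  by (simp add: Wprod_def ident_def fun_eq_iff)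

lemma Wprod_Wop_entry:
  assumes ab: "a \<in> S" "b \<in> S" "a \<notin> fst ` P \<union> snd ` P" "b \<notin> fst ` P \<union> snd ` P"
    and off: "\<And>s. s \<notin> S \<Longrightarrow> k s = j s"
  shows "Wprod S P i k * Wop S a b k j = (if k = j(a := i a, b := i b) then Wprod S (insert (a, b) P) i j else 0)"
proof -
  have pair_off: "fst p \<notin> {a, b}" "snd p \<notin> {a, b}" if "p \<in> P" for p
    using ab(3,4) that by force+
  show ?thesis
  proof (cases "k = j(a := i a, b := i b)")
    case True
    then show ?thesis
      using pair_off ab(1,2) unfolding Wprod_def Wop_def by auto
  next
    case False
    have "\<not> ((\<forall>s\<in>S - (fst ` P \<union> snd ` P). i s = k s) \<and> (\<forall>s\<in>S - {a, b}. k s = j s))"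
    proof
      assume H: "(\<forall>s\<in>S - (fst ` P \<union> snd ` P). i s = k s) \<and> (\<forall>s\<in>S - {a, b}. k s = j s)"
      have "k = j(a := i a, b := i b)"
      proof
        fix s show "k s = (j(a := i a, b := i b)) s"
          using H ab off by (cases "s \<in> S") auto
      qed
      then show False using False by blast
    qed
    then show ?thesis
      using False unfolding Wprod_def Wop_def by auto
  qed
qed

lemma Wprod_insert:
  assumes S: "finite S" "a \<in> S" "b \<in> S" and P: "a \<notin> fst ` P \<union> snd ` P" "b \<notin> fst ` P \<union> snd ` P"
    and i: "i \<in> idx S d" and j: "j \<in> idx S d"
  shows "opmult S d (Wprod S P) (Wop S a b) i j = Wprod S (insert (a, b) P) i j"
proof -
  define k0 where "k0 = j(a := i a, b := i b)"
  have k0: "k0 \<in> idx S d"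
    unfolding k0_def using i j S by (intro idx_upd) (auto simp: idx_def)
  have "opmult S d (Wprod S P) (Wop S a b) i j =
      (\<Sum>k\<in>idx S d. if k = k0 then Wprod S (insert (a, b) P) i j else 0)"
    unfolding opmult_def k0_def
    using Wprod_Wop_entry[OF S(2,3) P] j by (intro sum.cong) (auto simp: idx_def PiE_def extensional_def)
  also have "\<dots> = Wprod S (insert (a, b) P) i j"
    using k0 S(1) by (simp add: finite_PiE idx_def)
  finally show ?thesis .
qed

lemma covered_mirror_pairs:
  "fst ` (\<lambda>k. (p+1-k, p+k)) ` K \<union> snd ` (\<lambda>k. (p+1-k, p+k)) ` K = (\<lambda>k. p+1-k) ` K \<union> (\<lambda>k. p+k) ` K"
  by (simp add: image_image)

lemma fold_Wop_eq_Wprod: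
  assumes S: "finite S" "{2..2*p-1} \<subseteq> S"
  shows "n \<le> p \<Longrightarrow> i \<in> idx S d \<Longrightarrow> j \<in> idx S d \<Longrightarrow>
    fold (\<lambda>k A. opmult S d A (Wop S (p+1-k) (p+k))) [1..<n] (ident S) i j =
    Wprod S ((\<lambda>k. (p+1-k, p+k)) ` {1..<n}) i j"
proof (induction n arbitrary: i j)
  case 0
  then show ?case by (simp add: Wprod_empty)
next
  case (Suc n)
  show ?case
  proof (cases "n = 0")
    case True
    then show ?thesis by (simp add: Wprod_empty)
  next
    case False
    let ?P = "(\<lambda>k. (p+1-k, p+k)) ` {1..<n}"
    have "p+1-n \<in> {2..2*p-1}" "p+n \<in> {2..2*p-1}" using Suc.prems(1) False by auto
    then have ab: "p+1-n \<in> S" "p+n \<in> S" using S(2) by blast+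
    have new: "p+1-n \<notin> fst ` ?P \<union> snd ` ?P" "p+n \<notin> fst ` ?P \<union> snd ` ?P"
      unfolding covered_mirror_pairs using Suc.prems(1) by auto
    have "fold (\<lambda>k A. opmult S d A (Wop S (p+1-k) (p+k))) [1..<Suc n] (ident S) i j =
        opmult S d (fold (\<lambda>k A. opmult S d A (Wop S (p+1-k) (p+k))) [1..<n] (ident S)) (Wop S (p+1-n) (p+n)) i j"
      using False by simp
    also have "\<dots> = opmult S d (Wprod S ?P) (Wop S (p+1-n) (p+n)) i j"
      using Suc.IH Suc.prems by (intro opmult_cong_left) auto
    also have "\<dots> = Wprod S (insert (p+1-n, p+n) ?P) i j"
      by (rule Wprod_insert[OF S(1) ab new Suc.prems(2,3)])
    also have "insert (p+1-n, p+n) ?P = (\<lambda>k. (p+1-k, p+k)) ` {1..<Suc n}"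
      using False by (auto simp: atLeastLessThanSuc)
    finally show ?thesis .
  qed
qed

lemma Vprod_eq:
  assumes S: "finite S" "{2..2*p-1} \<subseteq> S" and i: "i \<in> idx S d" and j: "j \<in> idx S d"
  shows "Vprod S d p i j =
    (if palindromic p i \<and> palindromic p j \<and> (\<forall>s\<in>S - {2..2*p-1}. i s = j s) then 1 else 0)"
proof -
  let ?P = "(\<lambda>k. (p+1-k, p+k)) ` {1..<p}"
  have "(\<lambda>k. p+1-k) ` {1..<p} \<union> (\<lambda>k. p+k) ` {1..<p} = {2..2*p-1}"
  proof (intro equalityI subsetI)
    fix s assume s: "s \<in> {2..2*p-1}"
    show "s \<in> (\<lambda>k. p+1-k) ` {1..<p} \<union> (\<lambda>k. p+k) ` {1..<p}"
    proof (cases "s \<le> p")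
      case True
      then have "s = p+1-(p+1-s)" "p+1-s \<in> {1..<p}" using s by auto
      then show ?thesis by blast
    next
      case False
      then have "s = p+(s-p)" "s-p \<in> {1..<p}" using s by auto
      then show ?thesis by blast
    qed
  qed auto
  then have covered: "fst ` ?P \<union> snd ` ?P = {2..2*p-1}"
    unfolding covered_mirror_pairs .
  have pairs: "(\<forall>q\<in>?P. i (fst q) = i (snd q) \<and> j (fst q) = j (snd q)) \<longleftrightarrow>
      palindromic p i \<and> palindromic p j"
    unfolding palindromic_iff_pairs by auto
  have "Vprod S d p i j = Wprod S ?P i j"
    unfolding Vprod_def by (rule fold_Wop_eq_Wprod[OF S le_refl i j])
  then show ?thesis
    unfolding Wprod_def covered pairs conj_assoc .
qed

section \<open>Palindromic completions and the factorization\<close>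

definition pal_completions :: "nat \<Rightarrow> nat \<Rightarrow> mi \<Rightarrow> mi set" where
  "pal_completions p d a = {l \<in> idx {1..2*p} d. palindromic p l \<and> (\<forall>s\<in>{1, 2*p}. l s = a s)}"

lemma pal_completions_cong:
  "\<forall>s\<in>{1, 2*p}. a s = b s \<Longrightarrow> pal_completions p d a = pal_completions p d b"
  unfolding pal_completions_def by auto

lemma ends_split: "1 \<le> (p::nat) \<Longrightarrow> {1..2*p} - {2..2*p-1} = {1, 2*p}"
  by auto

lemma Vprod_full_eq:
  assumes "1 \<le> p" and i: "i \<in> idx {1..2*p} d" and l: "l \<in> idx {1..2*p} d"
  shows "Vprod {1..2*p} d p i l = (if palindromic p i \<and> l \<in> pal_completions p d i then 1 else 0)"
    and "Vprod {1..2*p} d p i l = (if palindromic p l \<and> i \<in> pal_completions p d l then 1 else 0)"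
proof -
  have "Vprod {1..2*p} d p i l = (if palindromic p i \<and> palindromic p l \<and> (\<forall>s\<in>{1, 2*p}. i s = l s) then 1 else 0)"
    using Vprod_eq[of "{1..2*p}" p i d l] i l unfolding ends_split[OF assms(1)] by simp
  then show "Vprod {1..2*p} d p i l = (if palindromic p i \<and> l \<in> pal_completions p d i then 1 else 0)"
    and "Vprod {1..2*p} d p i l = (if palindromic p l \<and> i \<in> pal_completions p d l then 1 else 0)"
    using i l unfolding pal_completions_def by auto
qed

lemma sum_filter_pal_completions:
  "(\<Sum>l\<in>idx {1..2*p} d. if l \<in> pal_completions p d a then F l else 0) = (\<Sum>l\<in>pal_completions p d a. F l)"
proof -
  have "(\<Sum>l\<in>idx {1..2*p} d. if l \<in> pal_completions p d a then F l else 0) =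
      (\<Sum>l\<in>{l \<in> idx {1..2*p} d. l \<in> pal_completions p d a}. F l)"
    by (rule sum.inter_filter[symmetric]) (simp add: finite_idx)
  also have "{l \<in> idx {1..2*p} d. l \<in> pal_completions p d a} = pal_completions p d a"
    by (auto simp: pal_completions_def)
  finally show ?thesis .
qed

lemma palindromic_glue_middle: "palindromic p (glue {2..2*p-1} m a) = palindromic p m"
  by (intro palindromic_cong) (simp add: glue_def)

lemma glue_middle_idx:
  assumes "1 \<le> p" "m \<in> idx {2..2*p-1} d" "a \<in> idx {1, 2*p} d"
  shows "glue {2..2*p-1} m a \<in> idx {1..2*p} d"
  using bij_betw_apply[OF bij_betw_glue[of "{2..2*p-1}" "{1..2*p}" a "{..<d}"]] assms
  unfolding idx_def ends_split[OF assms(1)] by auto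

lemma sum_pal_completions:
  assumes p: "1 \<le> p" and a: "a \<in> idx {1, 2*p} d"
  shows "(\<Sum>m\<in>idx {2..2*p-1} d. if palindromic p m then F (glue {2..2*p-1} m a) else 0) =
    (\<Sum>l\<in>pal_completions p d a. F l)"
proof -
  let ?M = "{2..2*p-1}" and ?S = "{1..2*p}"
  have "(\<Sum>m\<in>idx ?M d. if palindromic p m then F (glue ?M m a) else 0) =
      (\<Sum>m\<in>idx ?M d. (\<lambda>L. if palindromic p L then F L else 0) (glue ?M m a))"
    by (simp only: palindromic_glue_middle)
  also have "\<dots> = (\<Sum>L\<in>idx ?S d. if \<forall>x\<in>?S - ?M. L x = a x then (if palindromic p L then F L else 0) else 0)"
    unfolding idx_def
    by (rule sum_glue[where F = "\<lambda>L. if palindromic p L then F L else 0"])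
      (unfold ends_split[OF p], use a in \<open>auto simp: idx_def\<close>)
  also have "\<dots> = (\<Sum>L\<in>idx ?S d. if L \<in> pal_completions p d a then F L else 0)"
    unfolding ends_split[OF p] by (intro sum.cong refl) (auto simp: pal_completions_def)
  finally show ?thesis
    unfolding sum_filter_pal_completions .
qed

lemma ptrace_mult_Vprod:
  assumes p: "1 \<le> p" and a: "a \<in> idx {1, 2*p} d" and b: "b \<in> idx {1, 2*p} d"
  shows "ptrace {2..2*p-1} d (opmult {1..2*p} d X (Vprod {1..2*p} d p)) a b =
    (\<Sum>l\<in>pal_completions p d a. \<Sum>l'\<in>pal_completions p d b. X l l')"
proof -
  let ?M = "{2..2*p-1}" and ?S = "{1..2*p}"
  have "opmult ?S d X (Vprod ?S d p) (glue ?M m a) (glue ?M m b) =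
      (if palindromic p m then \<Sum>l'\<in>pal_completions p d b. X (glue ?M m a) l' else 0)"
    if m: "m \<in> idx ?M d" for m
  proof -
    have Vb: "Vprod ?S d p l' (glue ?M m b) = (if palindromic p m \<and> l' \<in> pal_completions p d b then 1 else 0)"
      if "l' \<in> idx ?S d" for l'
    proof -
      have "pal_completions p d (glue ?M m b) = pal_completions p d b"
        unfolding pal_completions_def glue_def by auto
      then show ?thesis
        by (simp only: Vprod_full_eq(2)[OF p that glue_middle_idx[OF p m b]] palindromic_glue_middle)
    qed
    have "opmult ?S d X (Vprod ?S d p) (glue ?M m a) (glue ?M m b) =
        (\<Sum>l'\<in>idx ?S d. if palindromic p m then (if l' \<in> pal_completions p d b then X (glue ?M m a) l' else 0) else 0)"
      unfolding opmult_def
    proof (rule sum.cong[OF refl])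
      fix l' assume "l' \<in> idx ?S d"
      then show "X (glue ?M m a) l' * Vprod ?S d p l' (glue ?M m b) =
          (if palindromic p m then (if l' \<in> pal_completions p d b then X (glue ?M m a) l' else 0) else 0)"
        using Vb by simp
    qed
    then show ?thesis
      unfolding sum_filter_pal_completions[symmetric] by simp
  qed
  then have "ptrace ?M d (opmult ?S d X (Vprod ?S d p)) a b =
      (\<Sum>m\<in>idx ?M d. if palindromic p m then \<Sum>l'\<in>pal_completions p d b. X (glue ?M m a) l' else 0)"
    unfolding ptrace_def glue_def[abs_def] by (intro sum.cong) auto
  also have "\<dots> = (\<Sum>l\<in>pal_completions p d a. \<Sum>l'\<in>pal_completions p d b. X l l')"
    by (rule sum_pal_completions[OF p a])
  finally show ?thesis .
qed

lemma Vprod_mult_mult_Vprod: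
  assumes p: "1 \<le> p" and i: "i \<in> idx {1..2*p} d" and j: "j \<in> idx {1..2*p} d"
  shows "opmult {1..2*p} d (opmult {1..2*p} d (Vprod {1..2*p} d p) X) (Vprod {1..2*p} d p) i j =
    (if palindromic p i \<and> palindromic p j
     then \<Sum>l\<in>pal_completions p d i. \<Sum>l'\<in>pal_completions p d j. X l l' else 0)"
proof -
  let ?S = "{1..2*p}" and ?G = "pal_completions p d"
  have "opmult ?S d (opmult ?S d (Vprod ?S d p) X) (Vprod ?S d p) i j =
      (\<Sum>l'\<in>idx ?S d. \<Sum>l\<in>idx ?S d. if palindromic p i \<and> palindromic p j
         then (if l \<in> ?G i then (if l' \<in> ?G j then X l l' else 0) else 0) else 0)"
    unfolding opmult_def sum_distrib_right
  proof (intro sum.cong refl)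
    fix l l' assume l: "l \<in> idx ?S d" and l': "l' \<in> idx ?S d"
    show "Vprod ?S d p i l * X l l' * Vprod ?S d p l' j = (if palindromic p i \<and> palindromic p j
         then (if l \<in> ?G i then (if l' \<in> ?G j then X l l' else 0) else 0) else 0)"
      using Vprod_full_eq(1)[OF p i l] Vprod_full_eq(2)[OF p l' j] by simp
  qed
  also have "\<dots> = (\<Sum>l\<in>idx ?S d. \<Sum>l'\<in>idx ?S d. if palindromic p i \<and> palindromic p j
         then (if l \<in> ?G i then (if l' \<in> ?G j then X l l' else 0) else 0) else 0)"
    by (rule sum.swap)
  also have "\<dots> = (if palindromic p i \<and> palindromic p j
      then \<Sum>l\<in>idx ?S d. if l \<in> ?G i then (\<Sum>l'\<in>idx ?S d. if l' \<in> ?G j then X l l' else 0) else 0 else 0)"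
    by (auto intro: sum.cong)
  finally show ?thesis
    unfolding sum_filter_pal_completions .
qed

lemma Vprod_mult_mult_Vprod_tensor:
  fixes X :: op
  assumes p: "1 \<le> p" and i: "i \<in> idx {1..2*p} d" and j: "j \<in> idx {1..2*p} d"
  defines "Xt \<equiv> ptrace {2..2*p-1} d (opmult {1..2*p} d X (Vprod {1..2*p} d p))"
  shows "opmult {1..2*p} d (opmult {1..2*p} d (Vprod {1..2*p} d p) X) (Vprod {1..2*p} d p) i j =
    optensor {1, 2*p} {2..2*p-1} Xt (Vprod {2..2*p-1} d p) i j"
proof -
  let ?E = "{1, 2*p}" and ?M = "{2..2*p-1}"
  have E: "?E \<subseteq> {1..2*p}" and M: "?M \<subseteq> {1..2*p}" using p by auto
  have "Xt (restrict i ?E) (restrict j ?E) =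
      (\<Sum>l\<in>pal_completions p d i. \<Sum>l'\<in>pal_completions p d j. X l l')"
  proof -
    have "pal_completions p d (restrict i ?E) = pal_completions p d i"
      "pal_completions p d (restrict j ?E) = pal_completions p d j"
      by (intro pal_completions_cong; simp)+
    then show ?thesis
      unfolding Xt_def ptrace_mult_Vprod[OF p restrict_idx[OF i E] restrict_idx[OF j E]] by simp
  qed
  moreover have "Vprod ?M d p (restrict i ?M) (restrict j ?M) =
      (if palindromic p i \<and> palindromic p j then 1 else 0)"
  proof -
    have "palindromic p (restrict i ?M) = palindromic p i" "palindromic p (restrict j ?M) = palindromic p j"
      by (intro palindromic_cong; simp)+
    then show ?thesis
      using Vprod_eq[OF _ _ restrict_idx[OF i M] restrict_idx[OF j M]] by simp
  qed
  ultimately show ?thesis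
    unfolding optensor_def Vprod_mult_mult_Vprod[OF p i j] by simp
qed

section \<open>Partially transposed permutation operators\<close>

lemma fold_ptrans1:
  "distinct ks \<Longrightarrow> fold ptrans1 ks F i j =
    F (\<lambda>k. if k \<in> set ks then j k else i k) (\<lambda>k. if k \<in> set ks then i k else j k)"
proof (induction ks arbitrary: F)
  case (Cons x xs)
  have "fold ptrans1 (x # xs) F i j = ptrans1 x F (\<lambda>k. if k \<in> set xs then j k else i k)
      (\<lambda>k. if k \<in> set xs then i k else j k)"
    using Cons by simp
  also have "\<dots> = F (\<lambda>k. if k \<in> set (x # xs) then j k else i k) (\<lambda>k. if k \<in> set (x # xs) then i k else j k)"
    unfolding ptrans1_def using Cons.prems by (intro arg_cong2[where f = F]) (auto simp: fun_eq_iff)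
  finally show ?case .
qed simp

text \<open>In the entry at (l, l') of the permutation operator transposed on the systems p+1, ..., 2p,
  the row label of system t is taken from l if t \<le> p and from l' otherwise, and the column label
  the other way round. The labels of l and l' are the values of two_copies l l' at the ports
  (True, t) and (False, t).\<close>

definition row_port :: "nat \<Rightarrow> nat \<Rightarrow> bool \<times> nat" where
  "row_port p t = (t \<le> p, t)"

definition col_port :: "nat \<Rightarrow> nat \<Rightarrow> bool \<times> nat" where
  "col_port p t = (p < t, t)"

lemma mem_row_port_image: "(r, t) \<in> row_port p ` A \<longleftrightarrow> t \<in> A \<and> r = (t \<le> p)"
  by (auto simp: row_port_def)

lemma mem_col_port_image: "(r, t) \<in> col_port p ` A \<longleftrightarrow> t \<in> A \<and> r = (p < t)"
  by (auto simp: col_port_def)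

lemma row_port_eq_iff: "row_port p s = row_port p t \<longleftrightarrow> s = t"
  by (auto simp: row_port_def)

lemma col_port_eq_iff: "col_port p s = col_port p t \<longleftrightarrow> s = t"
  by (auto simp: col_port_def)

lemma row_port_neq_col_port: "row_port p s \<noteq> col_port p t"
  by (auto simp: row_port_def col_port_def)

lemma ptrans_permop_eq:
  assumes "\<pi> permutes {1..2*p}"
  shows "fold ptrans1 [p+1..<2*p+1] (permop {1..2*p} \<pi>) l l' =
    (if \<forall>s\<in>{1..2*p}. two_copies l l' (row_port p (\<pi> s)) = two_copies l l' (col_port p s) then 1 else 0)"
proof -
  have \<pi>: "\<pi> s \<in> {1..2*p}" if "s \<in> {1..2*p}" for s
    using permutes_in_image[OF assms] that by blast
  have row: "(if t \<in> set [p+1..<2*p+1] then l' t else l t) = two_copies l l' (row_port p t)"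
    if "t \<in> {1..2*p}" for t
    using that by (auto simp: two_copies_def row_port_def)
  have col: "(if t \<in> set [p+1..<2*p+1] then l t else l' t) = two_copies l l' (col_port p t)"
    if "t \<in> {1..2*p}" for t
    using that by (auto simp: two_copies_def col_port_def)
  show ?thesis
    unfolding fold_ptrans1[OF distinct_upt] permop_def
    by (intro if_cong ball_cong refl) (simp only: row col \<pi>)
qed

lemma mirror_wires_iff_palindromic:
  "(\<forall>t\<in>{2..2*p-1}. two_copies l l' (col_port p t) = two_copies l l' (row_port p (2*p+1-t))) \<longleftrightarrow>
    palindromic p l \<and> palindromic p l'"
proof -
  have "(\<forall>t\<in>{2..2*p-1}. two_copies l l' (col_port p t) = two_copies l l' (row_port p (2*p+1-t))) \<longleftrightarrow>
      (\<forall>t\<in>{2..2*p-1}. (p < t \<longrightarrow> l t = l (2*p+1-t)) \<and> (t \<le> p \<longrightarrow> l' t = l' (2*p+1-t)))"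
  proof (rule ball_cong[OF refl])
    fix t assume "t \<in> {2..2*p-1}"
    then have "2*p+1-t \<le> p \<longleftrightarrow> p < t" by auto
    then show "two_copies l l' (col_port p t) = two_copies l l' (row_port p (2*p+1-t)) \<longleftrightarrow>
        (p < t \<longrightarrow> l t = l (2*p+1-t)) \<and> (t \<le> p \<longrightarrow> l' t = l' (2*p+1-t))"
      by (auto simp: two_copies_def row_port_def col_port_def)
  qed
  also have "\<dots> \<longleftrightarrow> (\<forall>t\<in>{2..2*p-1}. p < t \<longrightarrow> l t = l (2*p+1-t)) \<and>
      (\<forall>t\<in>{2..2*p-1}. t \<le> p \<longrightarrow> l' t = l' (2*p+1-t))"
    by (rule ball_conj_distrib)
  also have "\<dots> \<longleftrightarrow> palindromic p l \<and> palindromic p l'"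
    by (subst (1 2) palindromic_iff_half) auto
  finally show ?thesis .
qed

text \<open>Wire Inl s is the delta of the permutation at system s, wire Inr t the palindrome constraint
  at the middle system t.\<close>

definition wires :: "nat \<Rightarrow> (nat + nat) set" where
  "wires p = Inl ` {1..2*p} \<union> Inr ` {2..2*p-1}"

definition wire_src :: "nat \<Rightarrow> (nat \<Rightarrow> nat) \<Rightarrow> nat + nat \<Rightarrow> bool \<times> nat" where
  "wire_src p \<pi> = case_sum (\<lambda>s. row_port p (\<pi> s)) (col_port p)"

definition wire_snk :: "nat \<Rightarrow> nat + nat \<Rightarrow> bool \<times> nat" where
  "wire_snk p = case_sum (col_port p) (\<lambda>t. row_port p (2*p+1-t))"

lemma wired_wires_iff:
  "wired (wires p) (wire_src p \<pi>) (wire_snk p) L \<longleftrightarrow>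
    (\<forall>s\<in>{1..2*p}. L (row_port p (\<pi> s)) = L (col_port p s)) \<and>
    (\<forall>t\<in>{2..2*p-1}. L (col_port p t) = L (row_port p (2*p+1-t)))"
  by (simp add: wired_def wires_def wire_src_def wire_snk_def ball_Un)

lemma wiring_wires:
  assumes p: "1 \<le> p" and \<pi>: "\<pi> permutes {1..2*p}"
  shows "inj_on (wire_src p \<pi>) (wires p)" "inj_on (wire_snk p) (wires p)"
    "wire_src p \<pi> ` wires p = UNIV \<times> {2..2*p-1} \<union> {(True, 1), (False, 2*p)}"
    "wire_snk p ` wires p = UNIV \<times> {2..2*p-1} \<union> {(False, 1), (True, 2*p)}"
proof -
  note ports = row_port_eq_iff col_port_eq_iff row_port_neq_col_port row_port_neq_col_port[symmetric]
  have inj: "inj_on \<pi> {1..2*p}" using \<pi> by (rule permutes_inj_on)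
  show "inj_on (wire_src p \<pi>) (wires p)"
    by (intro inj_onI) (auto simp: wires_def wire_src_def ports inj_on_eq_iff[OF inj])
  show "inj_on (wire_snk p) (wires p)"
    by (intro inj_onI) (auto simp: wires_def wire_snk_def ports)
  have "wire_src p \<pi> ` wires p = row_port p ` \<pi> ` {1..2*p} \<union> col_port p ` {2..2*p-1}"
    unfolding wires_def wire_src_def image_Un image_image by simp
  also have "\<dots> = UNIV \<times> {2..2*p-1} \<union> {(True, 1), (False, 2*p)}"
    unfolding permutes_image[OF \<pi>] using p
    by (auto simp: set_eq_iff split_paired_All mem_row_port_image mem_col_port_image)
  finally show "wire_src p \<pi> ` wires p = UNIV \<times> {2..2*p-1} \<union> {(True, 1), (False, 2*p)}" .
  have "wire_snk p ` wires p = col_port p ` {1..2*p} \<union> row_port p ` (\<lambda>t. 2*p+1-t) ` {2..2*p-1}"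
    unfolding wires_def wire_snk_def image_Un image_image by simp
  also have "(\<lambda>t. 2*p+1-t) ` {2..2*p-1} = {2..2*p-1}"
    by (rule endo_inj_surj) (auto simp: inj_on_def mirror_in_middle)
  also have "col_port p ` {1..2*p} \<union> row_port p ` {2..2*p-1} = UNIV \<times> {2..2*p-1} \<union> {(False, 1), (True, 2*p)}"
    using p by (auto simp: set_eq_iff split_paired_All mem_row_port_image mem_col_port_image)
  finally show "wire_snk p ` wires p = UNIV \<times> {2..2*p-1} \<union> {(False, 1), (True, 2*p)}" .
qed

lemma wired_wires_iff_ptrans_palindromic:
  "wired (wires p) (wire_src p \<pi>) (wire_snk p) L \<longleftrightarrow>
    (\<forall>s\<in>{1..2*p}. L (row_port p (\<pi> s)) = L (col_port p s)) \<and>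
    palindromic p (\<lambda>s. L (True, s)) \<and> palindromic p (\<lambda>s. L (False, s))"
  using mirror_wires_iff_palindromic[of p "\<lambda>s. L (True, s)" "\<lambda>s. L (False, s)"]
  unfolding wired_wires_iff two_copies_of_sides by simp

lemma sum_pal_completions_pairs:
  "(\<Sum>l\<in>pal_completions p d a. \<Sum>l'\<in>pal_completions p d b. F (two_copies l l')) =
    (\<Sum>L\<in>PiE (UNIV \<times> {1..2*p}) (\<lambda>_. {..<d}).
      if (\<lambda>s. L (True, s)) \<in> pal_completions p d a \<and> (\<lambda>s. L (False, s)) \<in> pal_completions p d b
      then F L else 0)"
proof -
  let ?S = "{1..2*p}" and ?G = "pal_completions p d"
  have "(\<Sum>l\<in>?G a. \<Sum>l'\<in>?G b. F (two_copies l l')) =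
      (\<Sum>l\<in>idx ?S d. \<Sum>l'\<in>idx ?S d. if l \<in> ?G a \<and> l' \<in> ?G b then F (two_copies l l') else 0)"
    unfolding sum_filter_pal_completions[symmetric] by (auto intro: sum.cong)
  also have "\<dots> = (\<Sum>(l, l')\<in>idx ?S d \<times> idx ?S d. if l \<in> ?G a \<and> l' \<in> ?G b then F (two_copies l l') else 0)"
    by (rule sum.cartesian_product)
  also have "\<dots> = (\<Sum>L\<in>PiE (UNIV \<times> ?S) (\<lambda>_. {..<d}).
      if (\<lambda>s. L (True, s)) \<in> ?G a \<and> (\<lambda>s. L (False, s)) \<in> ?G b then F L else 0)"
    using sum.reindex_bij_betw[OF bij_betw_two_copies[of ?S "{..<d}"],
        of "\<lambda>L. if (\<lambda>s. L (True, s)) \<in> ?G a \<and> (\<lambda>s. L (False, s)) \<in> ?G b then F L else 0"]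
    unfolding idx_def by (simp add: split_def cong: if_cong)
  finally show ?thesis .
qed

lemma sum_pal_completions_two_copies:
  assumes p: "1 \<le> p" and a: "a \<in> idx {1, 2*p} d" and b: "b \<in> idx {1, 2*p} d"
  shows "(\<Sum>l\<in>pal_completions p d a. \<Sum>l'\<in>pal_completions p d b. F (two_copies l l')) =
    (\<Sum>w\<in>PiE (UNIV \<times> {2..2*p-1}) (\<lambda>_. {..<d}).
      (\<lambda>L. if palindromic p (\<lambda>s. L (True, s)) \<and> palindromic p (\<lambda>s. L (False, s)) then F L else 0)
        (glue (UNIV \<times> {2..2*p-1}) w (two_copies a b)))"
proof -
  let ?S = "{1..2*p}" and ?M = "{2..2*p-1}" and ?G = "pal_completions p d" and ?U = "UNIV :: bool set"
  let ?H = "\<lambda>L. if palindromic p (\<lambda>s. L (True, s)) \<and> palindromic p (\<lambda>s. L (False, s)) then F L else 0"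
  have ends: "?U \<times> ?S - ?U \<times> ?M = ?U \<times> {1, 2*p}"
    using ends_split[OF p] by blast
  have "(\<Sum>L\<in>PiE (?U \<times> ?S) (\<lambda>_. {..<d}).
      if (\<lambda>s. L (True, s)) \<in> ?G a \<and> (\<lambda>s. L (False, s)) \<in> ?G b then F L else 0) =
      (\<Sum>L\<in>PiE (?U \<times> ?S) (\<lambda>_. {..<d}).
      if \<forall>x\<in>?U \<times> ?S - ?U \<times> ?M. L x = two_copies a b x then ?H L else 0)"
  proof (rule sum.cong[OF refl])
    fix L assume L: "L \<in> PiE (?U \<times> ?S) (\<lambda>_. {..<d})"
    have "(\<forall>x\<in>?U \<times> ?S - ?U \<times> ?M. L x = two_copies a b x) \<longleftrightarrow>
        (\<forall>s\<in>{1, 2*p}. L (True, s) = a s) \<and> (\<forall>s\<in>{1, 2*p}. L (False, s) = b s)"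
      unfolding ends by (auto simp: two_copies_def)
    then show "(if (\<lambda>s. L (True, s)) \<in> ?G a \<and> (\<lambda>s. L (False, s)) \<in> ?G b then F L else 0) =
        (if \<forall>x\<in>?U \<times> ?S - ?U \<times> ?M. L x = two_copies a b x then ?H L else 0)"
      using copy_idx[OF L] unfolding pal_completions_def by auto
  qed
  also have "\<dots> = (\<Sum>w\<in>PiE (?U \<times> ?M) (\<lambda>_. {..<d}). ?H (glue (?U \<times> ?M) w (two_copies a b)))"
  proof (rule sum_glue[symmetric])
    show "two_copies a b \<in> PiE (?U \<times> ?S - ?U \<times> ?M) (\<lambda>_. {..<d})"
      using a b unfolding ends idx_def
      by (auto simp: two_copies_def PiE_iff extensional_def)
  qed (use p in auto)
  finally show ?thesis
    unfolding sum_pal_completions_pairs .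
qed

lemma sum_pal_completions_ptrans_permop:
  assumes p: "1 \<le> p" and \<pi>: "\<pi> permutes {1..2*p}"
  shows "\<exists>c h. bij_betw h {(True, 1), (False, 2*p)} {(False, 1), (True, 2*p)} \<and>
    (\<forall>a\<in>idx {1, 2*p} d. \<forall>b\<in>idx {1, 2*p} d.
      (\<Sum>l\<in>pal_completions p d a. \<Sum>l'\<in>pal_completions p d b.
        fold ptrans1 [p+1..<2*p+1] (permop {1..2*p} \<pi>) l l') =
      (of_nat d :: complex) ^ c *
        (if \<forall>x\<in>{(True, 1), (False, 2*p)}. two_copies a b x = two_copies a b (h x) then 1 else 0))"
proof -
  let ?I = "UNIV \<times> {2..2*p-1}" and ?Src = "{(True, 1), (False, 2*p)}" and ?Snk = "{(False, 1), (True, 2*p)}"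
  let ?wired = "wired (wires p) (wire_src p \<pi>) (wire_snk p)"
  have "\<exists>c h. bij_betw h ?Src ?Snk \<and> (\<forall>ext. (\<forall>x\<in>?Src \<union> ?Snk. ext x < d) \<longrightarrow>
      (\<Sum>w\<in>PiE ?I (\<lambda>_. {..<d}). if ?wired (glue ?I w ext) then 1 else 0) =
      (of_nat d :: complex) ^ c * (if \<forall>x\<in>?Src. ext x = ext (h x) then 1 else 0))"
  proof (rule wiring_contraction[OF _ wiring_wires[OF p \<pi>]])
    show "?I \<inter> ?Src = {}" "?I \<inter> ?Snk = {}" using p by auto
  qed simp
  then obtain c h where h: "bij_betw h ?Src ?Snk" and count: "\<forall>ext. (\<forall>x\<in>?Src \<union> ?Snk. ext x < d) \<longrightarrow>
      (\<Sum>w\<in>PiE ?I (\<lambda>_. {..<d}). if ?wired (glue ?I w ext) then 1 else 0) =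
      (of_nat d :: complex) ^ c * (if \<forall>x\<in>?Src. ext x = ext (h x) then 1 else 0)"
    by (elim exE conjE)
  show ?thesis
  proof (intro exI[of _ c] exI[of _ h] conjI h ballI)
    fix a b assume a: "a \<in> idx {1, 2*p} d" and b: "b \<in> idx {1, 2*p} d"
    have "a 1 < d" "a (2*p) < d" "b 1 < d" "b (2*p) < d"
      using a b by (auto simp: idx_def)
    then have "\<forall>x\<in>?Src \<union> ?Snk. two_copies a b x < d"
      by (simp add: two_copies_def)
    moreover have "(\<Sum>l\<in>pal_completions p d a. \<Sum>l'\<in>pal_completions p d b.
        fold ptrans1 [p+1..<2*p+1] (permop {1..2*p} \<pi>) l l') =
        (\<Sum>w\<in>PiE ?I (\<lambda>_. {..<d}). if ?wired (glue ?I w (two_copies a b)) then 1 else 0)"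
      unfolding ptrans_permop_eq[OF \<pi>] wired_wires_iff_ptrans_palindromic
        sum_pal_completions_two_copies[OF p a b,
          where F = "\<lambda>L. if \<forall>s\<in>{1..2*p}. L (row_port p (\<pi> s)) = L (col_port p s) then 1 else 0"]
      by (intro sum.cong refl) auto
    ultimately show "(\<Sum>l\<in>pal_completions p d a. \<Sum>l'\<in>pal_completions p d b.
        fold ptrans1 [p+1..<2*p+1] (permop {1..2*p} \<pi>) l l') =
        (of_nat d :: complex) ^ c * (if \<forall>x\<in>?Src. two_copies a b x = two_copies a b (h x) then 1 else 0)"
      using count by simp
  qed
qed

lemma in_A11_cong:
  "\<forall>i\<in>idx S d. \<forall>j\<in>idx S d. X i j = Y i j \<Longrightarrow> in_A11 S a b d X \<longleftrightarrow> in_A11 S a b d Y"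
  unfolding in_A11_def by simp

lemma in_A11_lincomb:
  assumes "\<forall>\<pi>\<in>P. in_A11 S a b d (F \<pi>)"
  shows "in_A11 S a b d (\<lambda>i j. \<Sum>\<pi>\<in>P. c \<pi> * F \<pi> i j)"
proof -
  have "\<forall>\<pi>\<in>P. \<exists>\<alpha>\<beta>. \<forall>i\<in>idx S d. \<forall>j\<in>idx S d.
      F \<pi> i j = fst \<alpha>\<beta> * ident S i j + snd \<alpha>\<beta> * Wop S a b i j"
    using assms unfolding in_A11_def by (metis fst_conv snd_conv)
  then obtain f where f: "\<forall>\<pi>\<in>P. \<forall>i\<in>idx S d. \<forall>j\<in>idx S d.
      F \<pi> i j = fst (f \<pi>) * ident S i j + snd (f \<pi>) * Wop S a b i j"
    by (metis bchoice)
  show ?thesis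
    unfolding in_A11_def
  proof (rule exI[of _ "\<Sum>\<pi>\<in>P. c \<pi> * fst (f \<pi>)"], rule exI[of _ "\<Sum>\<pi>\<in>P. c \<pi> * snd (f \<pi>)"], intro ballI)
    fix i j assume i: "i \<in> idx S d" and j: "j \<in> idx S d"
    have "(\<Sum>\<pi>\<in>P. c \<pi> * F \<pi> i j) = (\<Sum>\<pi>\<in>P. c \<pi> * (fst (f \<pi>) * ident S i j + snd (f \<pi>) * Wop S a b i j))"
      using f i j by (intro sum.cong) auto
    also have "\<dots> = (\<Sum>\<pi>\<in>P. c \<pi> * fst (f \<pi>)) * ident S i j + (\<Sum>\<pi>\<in>P. c \<pi> * snd (f \<pi>)) * Wop S a b i j"
      by (simp add: distrib_left sum.distrib sum_distrib_right mult.assoc)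
    finally show "(\<Sum>\<pi>\<in>P. c \<pi> * F \<pi> i j) =
        (\<Sum>\<pi>\<in>P. c \<pi> * fst (f \<pi>)) * ident S i j + (\<Sum>\<pi>\<in>P. c \<pi> * snd (f \<pi>)) * Wop S a b i j" .
  qed
qed

lemma in_A11_boundary_matching:
  assumes h: "bij_betw h {(True, a), (False, b)} {(False, a), (True, b)}" and ab: "a \<noteq> b"
    and F: "\<forall>i\<in>idx {a, b} d. \<forall>j\<in>idx {a, b} d.
      F i j = \<kappa> * (if \<forall>x\<in>{(True, a), (False, b)}. two_copies i j x = two_copies i j (h x) then 1 else 0)"
  shows "in_A11 {a, b} a b d F"
proof -
  have "h (True, a) \<in> {(False, a), (True, b)}" "h (False, b) \<in> {(False, a), (True, b)}"
    "h (True, a) \<noteq> h (False, b)"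
    using h ab unfolding bij_betw_def inj_on_def by auto
  then consider "h (True, a) = (False, a)" "h (False, b) = (True, b)"
    | "h (True, a) = (True, b)" "h (False, b) = (False, a)"
    by auto
  then show ?thesis
  proof cases
    case 1
    have "F i j = \<kappa> * ident {a, b} i j + 0 * Wop {a, b} a b i j"
      if "i \<in> idx {a, b} d" "j \<in> idx {a, b} d" for i j
      using F[rule_format, OF that] 1 by (auto simp: ident_def two_copies_def)
    then show ?thesis
      unfolding in_A11_def by blast
  next
    case 2
    have "F i j = 0 * ident {a, b} i j + \<kappa> * Wop {a, b} a b i j"
      if "i \<in> idx {a, b} d" "j \<in> idx {a, b} d" for i j
      using F[rule_format, OF that] 2 by (auto simp: Wop_def two_copies_def)
    then show ?thesis
      unfolding in_A11_def by blast
  qed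
qed

lemma ptrans_permop_pal_completions_in_A11:
  assumes p: "1 \<le> p" and \<pi>: "\<pi> permutes {1..2*p}"
  shows "in_A11 {1, 2*p} 1 (2*p) d (\<lambda>a b. \<Sum>l\<in>pal_completions p d a. \<Sum>l'\<in>pal_completions p d b.
    fold ptrans1 [p+1..<2*p+1] (permop {1..2*p} \<pi>) l l')"
proof -
  obtain c h where h: "bij_betw h {(True, 1), (False, 2*p)} {(False, 1), (True, 2*p)}"
    and sum: "\<forall>a\<in>idx {1, 2*p} d. \<forall>b\<in>idx {1, 2*p} d.
      (\<Sum>l\<in>pal_completions p d a. \<Sum>l'\<in>pal_completions p d b.
        fold ptrans1 [p+1..<2*p+1] (permop {1..2*p} \<pi>) l l') =
      (of_nat d :: complex) ^ c *
        (if \<forall>x\<in>{(True, 1), (False, 2*p)}. two_copies a b x = two_copies a b (h x) then 1 else 0)"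
    using sum_pal_completions_ptrans_permop[OF p \<pi>, where d = d] by (elim exE conjE) (rule that)
  have "1 \<noteq> 2*p" using p by simp
  from h this sum show ?thesis
    by (rule in_A11_boundary_matching)
qed

lemma ptrace_mult_Vprod_in_A11:
  assumes p: "1 \<le> p" and X: "in_Apq d p X"
  shows "in_A11 {1, 2*p} 1 (2*p) d (ptrace {2..2*p-1} d (opmult {1..2*p} d X (Vprod {1..2*p} d p)))"
proof -
  let ?P = "{\<pi>. \<pi> permutes {1..2*p}}" and ?G = "pal_completions p d"
  let ?T = "\<lambda>\<pi>. fold ptrans1 [p+1..<2*p+1] (permop {1..2*p} \<pi>)"
  obtain c where c: "\<forall>i\<in>idx {1..2*p} d. \<forall>j\<in>idx {1..2*p} d. X i j = (\<Sum>\<pi>\<in>?P. c \<pi> * ?T \<pi> i j)"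
    using X unfolding in_Apq_def by blast
  have expand: "(\<Sum>l\<in>?G a. \<Sum>l'\<in>?G b. X l l') = (\<Sum>\<pi>\<in>?P. c \<pi> * (\<Sum>l\<in>?G a. \<Sum>l'\<in>?G b. ?T \<pi> l l'))"
    for a b
  proof -
    have "(\<Sum>l\<in>?G a. \<Sum>l'\<in>?G b. X l l') = (\<Sum>l\<in>?G a. \<Sum>l'\<in>?G b. \<Sum>\<pi>\<in>?P. c \<pi> * ?T \<pi> l l')"
      using c by (intro sum.cong refl) (simp add: pal_completions_def)
    also have "\<dots> = (\<Sum>\<pi>\<in>?P. \<Sum>l\<in>?G a. \<Sum>l'\<in>?G b. c \<pi> * ?T \<pi> l l')"
      by (subst sum.swap) (simp only: sum.swap[of _ ?P])
    finally show ?thesis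
      by (simp add: sum_distrib_left)
  qed
  have lin: "in_A11 {1, 2*p} 1 (2*p) d (\<lambda>a b. \<Sum>\<pi>\<in>?P. c \<pi> * (\<Sum>l\<in>?G a. \<Sum>l'\<in>?G b. ?T \<pi> l l'))"
    using ptrans_permop_pal_completions_in_A11[OF p] by (intro in_A11_lincomb) simp
  have eq: "\<forall>a\<in>idx {1, 2*p} d. \<forall>b\<in>idx {1, 2*p} d.
      ptrace {2..2*p-1} d (opmult {1..2*p} d X (Vprod {1..2*p} d p)) a b =
      (\<Sum>\<pi>\<in>?P. c \<pi> * (\<Sum>l\<in>?G a. \<Sum>l'\<in>?G b. ?T \<pi> l l'))"
    using ptrace_mult_Vprod[OF p] expand by simp
  show ?thesis
    unfolding in_A11_cong[OF eq] by (fact lin)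
qed

theorem fact6:
  fixes d p :: nat and X :: op
  assumes "d \<ge> 2" and "p \<ge> 2" and "in_Apq d p X"
  defines "Xt \<equiv> ptrace {2..2*p-1} d (opmult {1..2*p} d X (Vprod {1..2*p} d p))"
  shows "in_A11 {1, 2*p} 1 (2*p) d Xt \<and>
    (\<forall>i\<in>idx {1..2*p} d. \<forall>j\<in>idx {1..2*p} d.
       opmult {1..2*p} d (opmult {1..2*p} d (Vprod {1..2*p} d p) X) (Vprod {1..2*p} d p) i j
       = optensor {1, 2*p} {2..2*p-1} Xt (Vprod {2..2*p-1} d p) i j)"
proof
  have p: "1 \<le> p" using assms(2) by simp
  show "in_A11 {1, 2*p} 1 (2*p) d Xt"
    unfolding Xt_def using p assms(3) by (rule ptrace_mult_Vprod_in_A11)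
  show "\<forall>i\<in>idx {1..2*p} d. \<forall>j\<in>idx {1..2*p} d.
      opmult {1..2*p} d (opmult {1..2*p} d (Vprod {1..2*p} d p) X) (Vprod {1..2*p} d p) i j
      = optensor {1, 2*p} {2..2*p-1} Xt (Vprod {2..2*p-1} d p) i j"
    unfolding Xt_def using Vprod_mult_mult_Vprod_tensor[OF p] by blast
qed

end
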